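(* Let $(V_k)_{k=1,\dots,K}$ be an $(\varepsilon,\mu)$-admissible family for some $\varepsilon>0$ and $\mu\ge1$. Let $u\in V$ with $\operatorname{dist}(u,\mathcal M)\le\varepsilon_{model}$, and let $w=P_Wu+\eta$ with $\eta\in W$, $\|\eta\|\le\varepsilon_{noise}$. Let $\mathcal S:V\to[0,\infty)$ satisfy $r\operatorname{dist}(v,\mathcal M)\le\mathcal S(v)\le R\operatorname{dist}(v,\mathcal M)$ for all $v\in V$ with $0<r\le R$, and let $u^*(w)=u^*_{k^*}(w)$ where $k^*$ is any minimizer of $k\mapsto\mathcal S(u_k^*(w))$. Then $$\|u-u^*(w)\|\le\delta_{\kappa\rho}+\varepsilon_{noise},\qquad \rho=\mu(\varepsilon+\varepsilon_{noise})+(\mu+1)\varepsilon_{model},\quad\kappa=R/r.$$ The same estimate holds with $\kappa=1$ if instead $k^*$ is any minimizer of $k\mapsto\operatorname{dist}(u_k^*(w),\mathcal M)$.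
   Context: $V$ is a real Hilbert space, $\mathcal M\subset V$ is compact, $W\subset V$ is a subspace of finite dimension $m$, $P_W$ is the orthogonal projection onto $W$ and $W^\perp$ its orthogonal complement. For a linear subspace $\bar V$ with $\bar V\cap W^\perp=\{0\}$, $\mu(\bar V,W)=\max_{v\in\bar V,\,v\ne0}\|v\|/\|P_Wv\|$ (set $\mu(\{0\},W)=1$). A family of affine spaces $V_k=\bar u_k+\bar V_k$ ($\bar u_k\in V$, $\bar V_k$ linear of dimension $\le m$, $\bar V_k\cap W^\perp=\{0\}$), $k=1,\dots,K$, is $(\varepsilon,\mu)$-admissible if there is a partition $\mathcal M=\bigcup_{k=1}^K\mathcal M_k$ with $\sup_{u\in\mathcal M_k}\operatorname{dist}(u,V_k)\le\varepsilon$ and $\mu(\bar V_k,W)\le\mu$ for all $k$. The PBDW estimators are $u_k^*(w)=\operatorname{argmin}\{\operatorname{dist}(v,V_k): v\in w+W^\perp\}$. For $\sigma\ge0$, $\mathcal M_\sigma=\{v\in V:\operatorname{dist}(v,\mathcal M)\le\sigma\}$ and $\delta_\sigma=\sup\{\|u-v\|: u,v\in\mathcal M_\sigma,\ u-v\in W^\perp\}$. *)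

theory Defs
  imports "HOL-Analysis.Analysis"
begin

definition fin_dim_subspace :: "'v::real_vector set \<Rightarrow> bool" where
  "fin_dim_subspace S \<longleftrightarrow> subspace S \<and> (\<exists>B. finite B \<and> S = span B)"

definition orth_proj :: "'v::real_inner set \<Rightarrow> 'v \<Rightarrow> 'v" where
  "orth_proj W v = (THE p. p \<in> W \<and> v - p \<in> orthogonal_comp W)"

definition mu_stab :: "'v::real_inner set \<Rightarrow> 'v set \<Rightarrow> real" where
  "mu_stab Vb W = (if Vb = {0} then 1
     else Sup ((\<lambda>v. norm v / norm (orth_proj W v)) ` (Vb - {0})))"

definition affine_sp :: "'v::real_vector \<Rightarrow> 'v set \<Rightarrow> 'v set" where
  "affine_sp ub Vb = (\<lambda>x. ub + x) ` Vb"

definition admissible ::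
  "'v::real_inner set \<Rightarrow> 'v set \<Rightarrow> nat \<Rightarrow> nat \<Rightarrow> (nat \<Rightarrow> 'v) \<Rightarrow> (nat \<Rightarrow> 'v set)
     \<Rightarrow> real \<Rightarrow> real \<Rightarrow> bool" where
  "admissible M W m K ub Vb eps mu \<longleftrightarrow>
     (\<forall>k\<in>{1..K}. fin_dim_subspace (Vb k) \<and> dim (Vb k) \<le> m
                  \<and> Vb k \<inter> orthogonal_comp W = {0}) \<and>
     (\<exists>Mk :: nat \<Rightarrow> 'v set.
        M = (\<Union>k\<in>{1..K}. Mk k) \<and> disjoint_family_on Mk {1..K} \<and>
        (\<forall>k\<in>{1..K}. (\<forall>u\<in>Mk k. infdist u (affine_sp (ub k) (Vb k)) \<le> eps)
                    \<and> mu_stab (Vb k) W \<le> mu))"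

definition pbdw :: "'v::real_inner set \<Rightarrow> 'v \<Rightarrow> 'v set \<Rightarrow> 'v \<Rightarrow> 'v" where
  "pbdw W ub Vb w = (SOME v. v \<in> (\<lambda>z. w + z) ` orthogonal_comp W \<and>
      (\<forall>v'\<in>(\<lambda>z. w + z) ` orthogonal_comp W.
          infdist v (affine_sp ub Vb) \<le> infdist v' (affine_sp ub Vb)))"

definition fattened :: "'v::real_normed_vector set \<Rightarrow> real \<Rightarrow> 'v set" where
  "fattened M s = {v. infdist v M \<le> s}"

definition delta :: "'v::real_inner set \<Rightarrow> 'v set \<Rightarrow> real \<Rightarrow> real" where
  "delta M W s = Sup {norm (u - v) | u v. u \<in> fattened M s \<and> v \<in> fattened M s
                        \<and> u - v \<in> orthogonal_comp W}"

end

theory Submission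
  imports Defs
begin

text \<open>
  Let \<open>z\<close> be a best approximation of \<open>u\<close> from \<open>M\<close> and \<open>V\<^sub>k\<close> the cell containing it, so
  that \<open>dist(u, V\<^sub>k) \<le> \<epsilon> + \<epsilon>_model\<close>. The PBDW estimator on \<open>V\<^sub>k\<close> has the form
  \<open>a + (w - P\<^sub>W a)\<close> with \<open>P\<^sub>W a\<close> a best approximation of \<open>w\<close> from \<open>P\<^sub>W V\<^sub>k\<close>. Its error
  therefore splits into a component in \<open>W\<close>, which is the noise, and a component in \<open>W\<^sup>\<bottom>\<close>,
  which is controlled by \<open>\<parallel>v\<parallel> \<le> \<mu> \<parallel>P\<^sub>W v\<parallel>\<close> on the linear part of \<open>V\<^sub>k\<close>. This gives
  \<open>\<parallel>u - u\<^sup>*\<^sub>k(w)\<parallel> \<le> \<mu> (dist(u, V\<^sub>k) + \<parallel>\<eta>\<parallel>)\<close>, hence \<open>dist(u\<^sup>*\<^sub>k(w), M) \<le> \<rho>\<close>, and either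
  selection rule picks a candidate within \<open>\<kappa> \<rho>\<close> of \<open>M\<close>. Every candidate agrees with
  \<open>u + \<eta>\<close> on \<open>W\<close>, so \<open>u + \<eta>\<close> and the selected candidate are two points of \<open>M\<^bsub>\<kappa>\<rho>\<^esub>\<close>
  whose difference lies in \<open>W\<^sup>\<bottom>\<close>; their distance is at most \<open>\<delta>\<^bsub>\<kappa>\<rho>\<^esub>\<close>.
\<close>

section \<open>Gram--Schmidt in real inner product spaces\<close>

text \<open>The library proves these facts for \<open>euclidean_space\<close> only; here the ambient space
  is an arbitrary real inner product space.\<close>

lemma Gram_Schmidt_step_finite:
  fixes S :: "'a::real_inner set"
  assumes fin: "finite S" and S: "pairwise orthogonal S" and x: "x \<in> span S"
  shows "orthogonal x (a - (\<Sum>b\<in>S. (b \<bullet> a / (b \<bullet> b)) *\<^sub>R b))"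
proof -
  have "orthogonal (a - (\<Sum>b\<in>S. (b \<bullet> a / (b \<bullet> b)) *\<^sub>R b)) y" if y: "y \<in> S" for y
  proof -
    have "(\<Sum>b\<in>S. (b \<bullet> a / (b \<bullet> b)) *\<^sub>R b) \<bullet> y = (\<Sum>b\<in>S. if b = y then y \<bullet> a else 0)"
      unfolding inner_sum_left
      by (rule sum.cong) (use S y in \<open>auto simp: pairwise_def orthogonal_def\<close>)
    also have "\<dots> = y \<bullet> a" using fin y by simp
    finally show ?thesis by (simp add: orthogonal_def inner_diff_right inner_commute)
  qed
  then show ?thesis
    using orthogonal_to_span orthogonal_commute x by blast
qed

lemma orthogonal_spanningset_finite:
  fixes B :: "'a::real_inner set"
  assumes "finite B"
  obtains T where "finite T" "pairwise orthogonal T" "span T = span B"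
proof -
  have "\<exists>T. finite T \<and> pairwise orthogonal T \<and> span T = span B"
    using assms
  proof (induction B rule: finite_induct)
    case empty
    show ?case by (intro exI[of _ "{}"]) auto
  next
    case (insert a B)
    then obtain T where T: "finite T" "pairwise orthogonal T" "span T = span B"
      by blast
    define a' where "a' = a - (\<Sum>b\<in>T. (b \<bullet> a / (b \<bullet> b)) *\<^sub>R b)"
    have "orthogonal a' y" if "y \<in> T" for y
      using Gram_Schmidt_step_finite[OF T(1,2) span_base[OF that]] a'_def orthogonal_commute
      by blast
    then have "pairwise orthogonal (insert a' T)"
      using T(2) by (auto intro: pairwise_orthogonal_insert)
    moreover have "span (insert a' T) = span (insert a B)"
    proof -
      have "a' - a \<in> span T" unfolding a'_def by (simp add: span_neg span_sum span_base span_mul)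
      then have "span (insert a' T) = span (insert a T)" by (rule eq_span_insert_eq)
      also have "\<dots> = span (insert a B)" using T(3) by (simp add: span_insert)
      finally show ?thesis .
    qed
    ultimately show ?case using T(1) by blast
  qed
  then show ?thesis using that by blast
qed

lemma orthogonal_expansion:
  fixes T :: "'a::real_inner set"
  assumes T: "finite T" "pairwise orthogonal T" and y: "y \<in> span T"
  shows "y = (\<Sum>b\<in>T. (b \<bullet> y / (b \<bullet> b)) *\<^sub>R b)"
proof -
  let ?d = "y - (\<Sum>b\<in>T. (b \<bullet> y / (b \<bullet> b)) *\<^sub>R b)"
  have "?d \<in> span T" using y by (simp add: span_diff span_sum span_base span_mul)
  then have "orthogonal ?d ?d" using Gram_Schmidt_step_finite[OF T] by blast
  then show ?thesis by (simp add: orthogonal_def)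
qed

lemma abs_orthogonal_coeff_le:
  fixes t y :: "'a::real_inner"
  shows "\<bar>t \<bullet> y / (t \<bullet> t)\<bar> \<le> norm y / norm t"
proof (cases "t = 0")
  case False
  have "\<bar>t \<bullet> y / (t \<bullet> t)\<bar> = \<bar>t \<bullet> y\<bar> / (norm t * norm t)"
    by (simp add: power2_norm_eq_inner[symmetric] power2_eq_square)
  also have "\<dots> \<le> norm t * norm y / (norm t * norm t)"
    by (rule divide_right_mono[OF Cauchy_Schwarz_ineq2]) simp
  also have "\<dots> = norm y / norm t" using False by simp
  finally show ?thesis .
qed simp

lemma orthogonal_projection_span_exists:
  fixes B :: "'a::real_inner set"
  assumes "finite B"
  obtains p where "p \<in> span B" "\<And>y. y \<in> span B \<Longrightarrow> (x - p) \<bullet> y = 0"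
proof -
  obtain T where T: "finite T" "pairwise orthogonal T" "span T = span B"
    using orthogonal_spanningset_finite[OF assms] by metis
  define p where "p = (\<Sum>b\<in>T. (b \<bullet> x / (b \<bullet> b)) *\<^sub>R b)"
  have "p \<in> span B" unfolding p_def T(3)[symmetric]
    by (simp add: span_sum span_base span_mul)
  moreover have "(x - p) \<bullet> y = 0" if "y \<in> span B" for y
    using Gram_Schmidt_step_finite[OF T(1,2)] T(3) that unfolding p_def orthogonal_def
    by (metis inner_commute)
  ultimately show ?thesis using that by blast
qed

lemma norm_diff_le_of_orthogonal:
  fixes x p y :: "'a::real_inner"
  assumes "(x - p) \<bullet> (p - y) = 0"
  shows "norm (x - p) \<le> norm (x - y)"
proof -
  have "(norm (x - y))\<^sup>2 = (norm (x - p))\<^sup>2 + (norm (p - y))\<^sup>2"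
    using norm_add_Pythagorean[of "x - p" "p - y"] assms by (simp add: orthogonal_def)
  then show ?thesis
    by (metis abs_norm_cancel le_add_same_cancel1 real_sqrt_abs real_sqrt_le_iff zero_le_power2)
qed

section \<open>Orthogonal projection onto a finite-dimensional subspace\<close>

lemma orth_proj_eqI:
  fixes W :: "'a::real_inner set"
  assumes W: "subspace W" and p: "p \<in> W" "x - p \<in> W\<^sup>\<bottom>"
  shows "orth_proj W x = p"
  unfolding orth_proj_def
proof (rule the_equality)
  show "p \<in> W \<and> x - p \<in> W\<^sup>\<bottom>" using p ..
next
  fix q assume q: "q \<in> W \<and> x - q \<in> W\<^sup>\<bottom>"
  have "q - p \<in> W" using W p q by (simp add: subspace_diff)
  moreover have "q - p \<in> W\<^sup>\<bottom>"
    using subspace_diff[OF subspace_orthogonal_comp p(2), of "x - q"] q by simp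
  ultimately have "(q - p) \<bullet> (q - p) = 0" by (auto simp: orthogonal_comp_def orthogonal_def)
  then show "q = p" by simp
qed

lemma inner_orthogonal_comp: "a \<in> W \<Longrightarrow> b \<in> W\<^sup>\<bottom> \<Longrightarrow> a \<bullet> b = 0"
  by (auto simp: orthogonal_comp_def orthogonal_def)

text \<open>The constraint set \<open>w + W\<^sup>\<bottom>\<close> of \<open>pbdw_def\<close>, written literally so that it matches there
  (note that \<open>(\<lambda>z. w + z) ` W\<^sup>\<bottom>\<close> would parse as \<open>((\<lambda>z. w + z) ` W)\<^sup>\<bottom>\<close>).\<close>
abbreviation proj_fibre :: "'a::real_inner set \<Rightarrow> 'a \<Rightarrow> 'a set" where
  "proj_fibre W w \<equiv> (\<lambda>z. w + z) ` orthogonal_comp W"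

locale fin_dim_proj =
  fixes W :: "'a::real_inner set"
  assumes fin_dim_W: "fin_dim_subspace W"
begin

abbreviation P where "P \<equiv> orth_proj W"

lemma subspace_W: "subspace W"
  using fin_dim_W by (simp add: fin_dim_subspace_def)

lemma orth_proj_in_W: "P x \<in> W" and orth_proj_residual: "x - P x \<in> W\<^sup>\<bottom>"
proof -
  obtain B where B: "finite B" "W = span B"
    using fin_dim_W by (auto simp: fin_dim_subspace_def)
  obtain p where p: "p \<in> span B" "\<And>y. y \<in> span B \<Longrightarrow> (x - p) \<bullet> y = 0"
    using orthogonal_projection_span_exists[OF B(1)] by metis
  have "p \<in> W" "x - p \<in> W\<^sup>\<bottom>"
    using B p by (auto simp: orthogonal_comp_def orthogonal_def inner_commute)
  then show "P x \<in> W" "x - P x \<in> W\<^sup>\<bottom>"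
    using orth_proj_eqI[OF subspace_W] by simp_all
qed

lemma linear_orth_proj: "linear P"
proof (rule linearI)
  fix x y show "P (x + y) = P x + P y"
    by (rule orth_proj_eqI[OF subspace_W])
      (use subspace_add[OF subspace_W orth_proj_in_W orth_proj_in_W]
           subspace_add[OF subspace_orthogonal_comp orth_proj_residual orth_proj_residual]
       in \<open>simp_all add: algebra_simps\<close>)
next
  fix c x show "P (c *\<^sub>R x) = c *\<^sub>R P x"
    by (rule orth_proj_eqI[OF subspace_W])
      (use subspace_scale[OF subspace_W orth_proj_in_W]
           subspace_scale[OF subspace_orthogonal_comp orth_proj_residual, of c x]
       in \<open>simp_all add: algebra_simps\<close>)
qed

lemmas orth_proj_add = linear_add[OF linear_orth_proj]
  and orth_proj_diff = linear_diff[OF linear_orth_proj]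
  and orth_proj_scale = linear_scale[OF linear_orth_proj]

lemma orth_proj_id: "x \<in> W \<Longrightarrow> P x = x"
  by (rule orth_proj_eqI[OF subspace_W]) (auto simp: subspace_0 subspace_orthogonal_comp)

lemma orth_proj_eq_0_iff: "P x = 0 \<longleftrightarrow> x \<in> W\<^sup>\<bottom>"
proof
  show "P x = 0 \<Longrightarrow> x \<in> W\<^sup>\<bottom>" using orth_proj_residual[of x] by simp
  show "x \<in> W\<^sup>\<bottom> \<Longrightarrow> P x = 0" by (rule orth_proj_eqI[OF subspace_W subspace_0[OF subspace_W]]) simp
qed

lemma norm_add_Pythagorean_orthogonal_comp:
  "a \<in> W \<Longrightarrow> b \<in> W\<^sup>\<bottom> \<Longrightarrow> (norm (a + b))\<^sup>2 = (norm a)\<^sup>2 + (norm b)\<^sup>2"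
  using inner_orthogonal_comp norm_add_Pythagorean orthogonal_def by blast

lemma norm_Pythagorean_orth_proj: "(norm x)\<^sup>2 = (norm (P x))\<^sup>2 + (norm (x - P x))\<^sup>2"
  using norm_add_Pythagorean_orthogonal_comp[of "P x" "x - P x"] orth_proj_in_W orth_proj_residual
  by simp

lemma norm_orth_proj_le: "norm (P x) \<le> norm x"
  using norm_Pythagorean_orth_proj[of x]
  by (metis abs_norm_cancel le_add_same_cancel1 real_sqrt_abs real_sqrt_le_iff zero_le_power2)

lemma orth_proj_eq_self_of_norm_le:
  assumes "norm x \<le> norm (P x)"
  shows "P x = x"
proof -
  have "(norm x)\<^sup>2 \<le> (norm (P x))\<^sup>2" using assms by (simp add: power_mono)
  then have "(norm (x - P x))\<^sup>2 \<le> 0" using norm_Pythagorean_orth_proj[of x] by linarith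
  then show ?thesis by simp
qed

lemma norm_residual_le:
  assumes "norm x \<le> mu * norm (P x)"
  shows "norm (x - P x) \<le> sqrt (mu\<^sup>2 - 1) * norm (P x)"
proof -
  have "(norm (x - P x))\<^sup>2 = (norm x)\<^sup>2 - (norm (P x))\<^sup>2"
    using norm_Pythagorean_orth_proj[of x] by linarith
  also have "\<dots> \<le> (mu * norm (P x))\<^sup>2 - (norm (P x))\<^sup>2"
    using assms by (simp add: power_mono)
  also have "\<dots> = (mu\<^sup>2 - 1) * (norm (P x))\<^sup>2"
    by (simp add: power_mult_distrib left_diff_distrib)
  finally have "(norm (x - P x))\<^sup>2 \<le> (mu\<^sup>2 - 1) * (norm (P x))\<^sup>2" .
  then have "sqrt ((norm (x - P x))\<^sup>2) \<le> sqrt ((mu\<^sup>2 - 1) * (norm (P x))\<^sup>2)"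
    by (rule real_sqrt_le_mono)
  then show ?thesis by (simp add: real_sqrt_mult)
qed

lemma orth_proj_fibre:
  assumes "w \<in> W" "v \<in> proj_fibre W w"
  shows "P v = w"
proof -
  obtain z where "z \<in> W\<^sup>\<bottom>" "v = w + z" using assms(2) by blast
  then show ?thesis using assms(1) orth_proj_eq_0_iff by (simp add: orth_proj_add orth_proj_id)
qed

lemma lift_mem_proj_fibre: "a + (w - P a) \<in> proj_fibre W w"
  unfolding image_iff using orth_proj_residual[of a] by (intro bexI[of _ "a - P a"]) simp_all

end

section \<open>Best approximation from affine spaces\<close>

lemma infdist_eq_dist_of_nearest:
  assumes b: "b \<in> A" and nearest: "\<And>a. a \<in> A \<Longrightarrow> dist x b \<le> dist x a"
  shows "infdist x A = dist x b"
proof (rule antisym)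
  show "infdist x A \<le> dist x b" using infdist_le[OF b] .
  have "A \<noteq> {}" using b by blast
  then show "dist x b \<le> infdist x A"
    unfolding infdist_notempty[OF \<open>A \<noteq> {}\<close>] by (rule cINF_greatest) (rule nearest)
qed

lemma compact_infdist_attained:
  fixes M :: "'a::metric_space set"
  assumes "compact M" "M \<noteq> {}"
  obtains m where "m \<in> M" "infdist x M = dist x m"
proof -
  have "continuous_on M (dist x)" by (intro continuous_intros)
  then obtain m where "m \<in> M" "\<And>y. y \<in> M \<Longrightarrow> dist x m \<le> dist x y"
    using continuous_attains_inf[OF assms] by blast
  then show ?thesis using that infdist_eq_dist_of_nearest by blast
qed

lemma mem_affine_sp: "a \<in> affine_sp ub V \<longleftrightarrow> (\<exists>y\<in>V. a = ub + y)"
  by (auto simp: affine_sp_def)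

lemma affine_sp_add_mem:
  "subspace V \<Longrightarrow> a \<in> affine_sp ub V \<Longrightarrow> x \<in> V \<Longrightarrow> a + x \<in> affine_sp ub V"
  by (auto simp: mem_affine_sp add.assoc intro: subspace_add)

lemma affine_sp_diff_mem:
  "subspace V \<Longrightarrow> a \<in> affine_sp ub V \<Longrightarrow> b \<in> affine_sp ub V \<Longrightarrow> a - b \<in> V"
  by (auto simp: mem_affine_sp intro: subspace_diff)

lemma nearest_point_affine_span:
  fixes B :: "'a::real_inner set"
  assumes "finite B"
  obtains b where "b \<in> affine_sp ub (span B)"
    "\<And>a. a \<in> affine_sp ub (span B) \<Longrightarrow> norm (x - b) \<le> norm (x - a)"
proof -
  obtain p where p: "p \<in> span B" "\<And>y. y \<in> span B \<Longrightarrow> ((x - ub) - p) \<bullet> y = 0"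
    using orthogonal_projection_span_exists[OF assms] by metis
  have "norm (x - (ub + p)) \<le> norm (x - a)" if a: "a \<in> affine_sp ub (span B)" for a
  proof -
    obtain y where y: "y \<in> span B" "a = ub + y" using a by (auto simp: mem_affine_sp)
    have "((x - ub) - p) \<bullet> (p - y) = 0" using p y(1) by (simp add: span_diff)
    then have "norm ((x - ub) - p) \<le> norm ((x - ub) - y)" by (rule norm_diff_le_of_orthogonal)
    then show ?thesis using y by (simp add: algebra_simps)
  qed
  moreover have "ub + p \<in> affine_sp ub (span B)" using p(1) by (auto simp: mem_affine_sp)
  ultimately show ?thesis using that by blast
qed

lemma infdist_affine_sp_attained:
  fixes V :: "'a::real_inner set"
  assumes "fin_dim_subspace V"
  obtains b where "b \<in> affine_sp ub V" "infdist x (affine_sp ub V) = norm (x - b)"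
proof -
  obtain B where B: "finite B" "V = span B" using assms by (auto simp: fin_dim_subspace_def)
  obtain b where "b \<in> affine_sp ub V" "\<And>a. a \<in> affine_sp ub V \<Longrightarrow> dist x b \<le> dist x a"
    using nearest_point_affine_span[OF B(1), of ub x] B(2) by (metis dist_norm)
  then show ?thesis using that infdist_eq_dist_of_nearest by (metis dist_norm)
qed

section \<open>The PBDW estimator\<close>

context fin_dim_proj
begin

lemma infdist_lift_le:
  "a \<in> affine_sp ub V \<Longrightarrow> infdist (a + (w - P a)) (affine_sp ub V) \<le> norm (w - P a)"
  using infdist_le[of a "affine_sp ub V" "a + (w - P a)"] by (simp add: dist_norm)

lemma norm_data_misfit_le:
  assumes "w \<in> W" "v \<in> proj_fibre W w"
  shows "norm (w - P a) \<le> norm (v - a)"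
  using norm_orth_proj_le[of "v - a"] orth_proj_fibre[OF assms] by (simp add: orth_proj_diff)

lemma best_data_fit_exists:
  assumes "fin_dim_subspace V"
  obtains a where "a \<in> affine_sp ub V"
    "\<And>a'. a' \<in> affine_sp ub V \<Longrightarrow> norm (w - P a) \<le> norm (w - P a')"
proof -
  obtain B where B: "finite B" "V = span B" using assms by (auto simp: fin_dim_subspace_def)
  have image: "P ` affine_sp ub V = affine_sp (P ub) (span (P ` B))"
    using span_linear_image[OF linear_orth_proj, of B] B(2)
    by (simp add: affine_sp_def image_image orth_proj_add)
  obtain c where c: "c \<in> affine_sp (P ub) (span (P ` B))"
    "\<And>c'. c' \<in> affine_sp (P ub) (span (P ` B)) \<Longrightarrow> norm (w - c) \<le> norm (w - c')"
    using nearest_point_affine_span[of "P ` B" "P ub" w] B(1) by blast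
  obtain a where a: "a \<in> affine_sp ub V" "c = P a" using c(1) image[symmetric] by blast
  show ?thesis
  proof (rule that[OF a(1)])
    fix a' assume "a' \<in> affine_sp ub V"
    then show "norm (w - P a) \<le> norm (w - P a')" using c(2) image a(2) by blast
  qed
qed

lemma pbdw_minimizer_exists:
  assumes V: "fin_dim_subspace V" and w: "w \<in> W"
  shows "\<exists>v. v \<in> proj_fibre W w \<and>
    (\<forall>v'\<in>proj_fibre W w. infdist v (affine_sp ub V) \<le> infdist v' (affine_sp ub V))"
proof -
  obtain a where a: "a \<in> affine_sp ub V"
    "\<And>a'. a' \<in> affine_sp ub V \<Longrightarrow> norm (w - P a) \<le> norm (w - P a')"
    using best_data_fit_exists[OF V] by blast
  have "infdist (a + (w - P a)) (affine_sp ub V) \<le> infdist v' (affine_sp ub V)"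
    if v': "v' \<in> proj_fibre W w" for v'
  proof -
    obtain b where b: "b \<in> affine_sp ub V" "infdist v' (affine_sp ub V) = norm (v' - b)"
      using infdist_affine_sp_attained[OF V] by blast
    have "infdist (a + (w - P a)) (affine_sp ub V) \<le> norm (w - P a)"
      by (rule infdist_lift_le[OF a(1)])
    also have "\<dots> \<le> norm (w - P b)" by (rule a(2)[OF b(1)])
    also have "\<dots> \<le> norm (v' - b)" by (rule norm_data_misfit_le[OF w v'])
    finally show ?thesis using b(2) by simp
  qed
  then show ?thesis using lift_mem_proj_fibre by blast
qed

lemma pbdw_mem: "fin_dim_subspace V \<Longrightarrow> w \<in> W \<Longrightarrow> pbdw W ub V w \<in> proj_fibre W w"
  and pbdw_minimal: "fin_dim_subspace V \<Longrightarrow> w \<in> W \<Longrightarrow> v' \<in> proj_fibre W w \<Longrightarrow>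
    infdist (pbdw W ub V w) (affine_sp ub V) \<le> infdist v' (affine_sp ub V)"
  using someI_ex[OF pbdw_minimizer_exists] unfolding pbdw_def by blast+

lemma pbdw_form:
  assumes V: "fin_dim_subspace V" and w: "w \<in> W"
  obtains a where "a \<in> affine_sp ub V" "pbdw W ub V w = a + (w - P a)"
    "\<And>a'. a' \<in> affine_sp ub V \<Longrightarrow> norm (w - P a) \<le> norm (w - P a')"
proof -
  let ?A = "affine_sp ub V" and ?v = "pbdw W ub V w"
  obtain a where a: "a \<in> ?A" "infdist ?v ?A = norm (?v - a)"
    using infdist_affine_sp_attained[OF V] by blast
  have misfit: "infdist ?v ?A \<le> norm (w - P a')" if "a' \<in> ?A" for a'
    using pbdw_minimal[OF V w lift_mem_proj_fibre] infdist_lift_le[OF that] by (rule order.trans)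
  have Pva: "P (?v - a) = w - P a"
    using orth_proj_fibre[OF w pbdw_mem[OF V w]] by (simp add: orth_proj_diff)
  then have "P (?v - a) = ?v - a"
    using misfit[OF a(1)] a(2) by (intro orth_proj_eq_self_of_norm_le) simp
  then have "?v = a + (w - P a)" using Pva by (simp add: algebra_simps)
  moreover have "norm (w - P a) \<le> norm (w - P a')" if "a' \<in> ?A" for a'
    using misfit[OF that] a(2) \<open>?v = a + (w - P a)\<close> by simp
  ultimately show ?thesis using that a(1) by blast
qed

end

section \<open>The stability constant\<close>

context fin_dim_proj
begin

lemma norm_le_const_orth_proj:
  assumes V: "fin_dim_subspace V" and inj: "V \<inter> W\<^sup>\<bottom> = {0}"
  obtains C where "\<And>y. y \<in> V \<Longrightarrow> norm y \<le> C * norm (P y)"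
proof -
  obtain B where B: "finite B" "V = span B" using V by (auto simp: fin_dim_subspace_def)
  obtain T where T: "finite T" "pairwise orthogonal T" "span T = span (P ` B)"
    using orthogonal_spanningset_finite[of "P ` B"] B(1) by blast
  have image: "span T = P ` V" using T(3) B(2) span_linear_image[OF linear_orth_proj] by simp
  have "\<forall>t\<in>T. \<exists>y\<in>V. P y = t"
    using span_base[of _ T] unfolding image by (metis imageE)
  then obtain pre where pre: "\<And>t. t \<in> T \<Longrightarrow> pre t \<in> V \<and> P (pre t) = t" by metis
  define C where "C = (\<Sum>t\<in>T. norm (pre t) / norm t)"
  have "norm y \<le> C * norm (P y)" if y: "y \<in> V" for y
  proof -
    define c where "c t = t \<bullet> P y / (t \<bullet> t)" for t
    have "P y \<in> span T" using image y by simp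
    then have Py: "P y = (\<Sum>t\<in>T. c t *\<^sub>R t)" unfolding c_def by (rule orthogonal_expansion[OF T(1,2)])
    define x where "x = (\<Sum>t\<in>T. c t *\<^sub>R pre t)"
    have "x \<in> V" using pre B(2) unfolding x_def by (simp add: span_sum span_mul)
    have "P x = (\<Sum>t\<in>T. c t *\<^sub>R P (pre t))"
      unfolding x_def by (simp add: linear_sum[OF linear_orth_proj] orth_proj_scale)
    also have "\<dots> = P y" unfolding Py using pre by (intro sum.cong) simp_all
    finally have "P x = P y" .
    then have "P (y - x) = 0" by (simp add: orth_proj_diff)
    moreover have "y - x \<in> V" using \<open>x \<in> V\<close> y B(2) by (simp add: span_diff)
    ultimately have "y - x \<in> V \<inter> W\<^sup>\<bottom>" using orth_proj_eq_0_iff by blast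
    then have "y = x" using inj by simp
    have "norm x \<le> (\<Sum>t\<in>T. \<bar>c t\<bar> * norm (pre t))" unfolding x_def
      using norm_sum[of "\<lambda>t. c t *\<^sub>R pre t" T] by simp
    also have "\<dots> \<le> (\<Sum>t\<in>T. norm (P y) / norm t * norm (pre t))"
      unfolding c_def by (intro sum_mono mult_right_mono abs_orthogonal_coeff_le) simp
    also have "\<dots> = C * norm (P y)" unfolding C_def by (simp add: sum_distrib_left mult.commute)
    finally show ?thesis using \<open>y = x\<close> by simp
  qed
  then show ?thesis using that by blast
qed

lemma norm_le_mu_stab:
  assumes V: "fin_dim_subspace V" and inj: "V \<inter> W\<^sup>\<bottom> = {0}" and x: "x \<in> V"
  shows "norm x \<le> mu_stab V W * norm (P x)"
proof (cases "x = 0")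
  case False
  have Px: "P x \<noteq> 0" using False x inj orth_proj_eq_0_iff by auto
  obtain C where C: "\<And>y. y \<in> V \<Longrightarrow> norm y \<le> C * norm (P y)"
    using norm_le_const_orth_proj[OF V inj] by blast
  have "bdd_above ((\<lambda>v. norm v / norm (P v)) ` (V - {0}))"
  proof (rule bdd_aboveI2)
    fix v assume v: "v \<in> V - {0}"
    then have "P v \<noteq> 0" using inj orth_proj_eq_0_iff by auto
    then show "norm v / norm (P v) \<le> C" using C v by (simp add: divide_le_eq)
  qed
  then have "norm x / norm (P x) \<le> mu_stab V W"
    unfolding mu_stab_def using False x by (auto intro: cSup_upper)
  then show ?thesis using Px by (simp add: divide_le_eq)
qed (simp add: linear_0[OF linear_orth_proj])

end

section \<open>Error of the PBDW estimator on a single affine space\<close>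

lemma norm_le_of_min_on_line:
  fixes g q :: "'a::real_inner"
  assumes min: "\<And>t. norm (g - q) \<le> norm (g - t *\<^sub>R q)"
  shows "norm q \<le> norm g"
proof (cases "q = 0")
  case False
  define p c where "p = q \<bullet> q" and "c = g \<bullet> q"
  have "p > 0" using False unfolding p_def by simp
  have sq: "(norm (g - t *\<^sub>R q))\<^sup>2 = g \<bullet> g - 2 * t * c + t\<^sup>2 * p" for t
    unfolding power2_norm_eq_inner p_def c_def
    by (simp add: inner_diff_left inner_diff_right inner_commute power2_eq_square algebra_simps)
  \<comment> \<open>compare the value at \<open>t = 1\<close> with the value at the minimiser \<open>t = c / p\<close> of the quadratic\<close>
  have "(norm (g - 1 *\<^sub>R q))\<^sup>2 \<le> (norm (g - (c / p) *\<^sub>R q))\<^sup>2"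
    using min[of "c / p"] by (simp add: power_mono)
  then have "p * (p - 2 * c) \<le> - (c * c)"
    unfolding sq using \<open>p > 0\<close> by (simp add: power2_eq_square field_simps)
  then have "(p - c)\<^sup>2 \<le> 0" by (simp add: power2_eq_square algebra_simps)
  then have "(norm q)\<^sup>2 = c" by (simp add: p_def power2_norm_eq_inner)
  also have "\<dots> \<le> norm g * norm q" unfolding c_def by (rule order.trans[OF abs_ge_self Cauchy_Schwarz_ineq2])
  finally show ?thesis using False by (simp add: power2_eq_square)
qed simp

lemma weighted_sum_le_sqrt:
  fixes s a b mu :: real
  assumes "s\<^sup>2 + 1 = mu\<^sup>2" "0 \<le> mu"
  shows "s * a + b \<le> mu * sqrt (a\<^sup>2 + b\<^sup>2)"
proof (rule power2_le_imp_le)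
  have "(s * a + b)\<^sup>2 \<le> (s * a + b)\<^sup>2 + (s * b - a)\<^sup>2" by simp
  also have "\<dots> = (s\<^sup>2 + 1) * (a\<^sup>2 + b\<^sup>2)" by (simp add: power2_eq_square algebra_simps)
  also have "\<dots> = (mu * sqrt (a\<^sup>2 + b\<^sup>2))\<^sup>2" using assms(1) by (simp add: power_mult_distrib)
  finally show "(s * a + b)\<^sup>2 \<le> (mu * sqrt (a\<^sup>2 + b\<^sup>2))\<^sup>2" .
qed (use assms(2) in simp)

lemma sqrt_sum_squares_le:
  fixes s A G mu :: real
  assumes "s\<^sup>2 + 1 = mu\<^sup>2" "0 \<le> s" "0 \<le> mu" "0 \<le> A" "0 \<le> G"
  shows "sqrt ((A + s * G)\<^sup>2 + G\<^sup>2) \<le> A + mu * G"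
proof -
  have "s\<^sup>2 \<le> mu\<^sup>2" using assms(1) by linarith
  then have "s \<le> mu" using assms(3) by (rule power2_le_imp_le)
  then have "s * G \<le> mu * G" using assms(5) by (rule mult_right_mono)
  then have "2 * A * (s * G) \<le> 2 * A * (mu * G)" using assms(4) by (intro mult_left_mono) simp_all
  have "(A + s * G)\<^sup>2 + G\<^sup>2 = A\<^sup>2 + 2 * A * (s * G) + (s\<^sup>2 + 1) * G\<^sup>2"
    by (simp add: power2_eq_square algebra_simps)
  also have "\<dots> \<le> A\<^sup>2 + 2 * A * (mu * G) + mu\<^sup>2 * G\<^sup>2"
    using \<open>2 * A * (s * G) \<le> 2 * A * (mu * G)\<close> assms(1) by simp
  also have "\<dots> = (A + mu * G)\<^sup>2" by (simp add: power2_eq_square algebra_simps)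
  finally show ?thesis using assms by (simp add: real_le_lsqrt real_sqrt_le_iff)
qed

context fin_dim_proj
begin

lemma norm_orth_proj_diff_le:
  assumes V: "subspace V" and a: "a \<in> affine_sp ub V" and b: "b \<in> affine_sp ub V"
    and best: "\<And>a'. a' \<in> affine_sp ub V \<Longrightarrow> norm (w - P a) \<le> norm (w - P a')"
  shows "norm (P (a - b)) \<le> norm (w - P b)"
proof (rule norm_le_of_min_on_line)
  fix t :: real
  have "b + t *\<^sub>R (a - b) \<in> affine_sp ub V"
    using affine_sp_add_mem[OF V b] affine_sp_diff_mem[OF V a b] subspace_scale[OF V] by blast
  from best[OF this] show "norm ((w - P b) - P (a - b)) \<le> norm ((w - P b) - t *\<^sub>R P (a - b))"
    by (simp add: orth_proj_add orth_proj_diff orth_proj_scale algebra_simps)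
qed


lemma norm_residual_diff_le:
  assumes x: "norm (x - P x) \<le> s * norm (P x)" and Px: "norm (P x) \<le> norm (P e) + G"
    and s: "s\<^sup>2 + 1 = mu\<^sup>2" "0 \<le> s" "0 \<le> mu"
  shows "norm ((x - P x) - (e - P e)) \<le> mu * norm e + s * G"
proof -
  have "norm ((x - P x) - (e - P e)) \<le> s * norm (P x) + norm (e - P e)"
    using x norm_triangle_ineq4[of "x - P x" "e - P e"] by linarith
  also have "\<dots> \<le> (s * norm (P e) + norm (e - P e)) + s * G"
    using mult_left_mono[OF Px s(2)] by (simp add: distrib_left)
  also have "s * norm (P e) + norm (e - P e) \<le> mu * norm e"
    using weighted_sum_le_sqrt[OF s(1), of "norm (P e)" "norm (e - P e)"] s(3)
    by (simp flip: norm_Pythagorean_orth_proj)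
  finally show ?thesis by simp
qed

lemma pbdw_error_le:
  assumes V: "fin_dim_subspace V" "V \<inter> W\<^sup>\<bottom> = {0}" "mu_stab V W \<le> mu"
    and mu: "1 \<le> mu" and w: "w \<in> W"
  shows "norm (pbdw W ub V w - z) \<le> mu * (infdist z (affine_sp ub V) + norm (w - P z))"
proof -
  let ?A = "affine_sp ub V"
  define s where "s = sqrt (mu\<^sup>2 - 1)"
  have s: "s\<^sup>2 + 1 = mu\<^sup>2" "0 \<le> s" using mu one_le_power[OF mu, of 2] by (simp_all add: s_def)
  have subspace_V: "subspace V" using V(1) by (simp add: fin_dim_subspace_def)
  obtain a where a: "a \<in> ?A" "pbdw W ub V w = a + (w - P a)"
    and best: "\<And>a'. a' \<in> ?A \<Longrightarrow> norm (w - P a) \<le> norm (w - P a')"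
    using pbdw_form[OF V(1) w] by blast
  obtain b where b: "b \<in> ?A" "infdist z ?A = norm (z - b)"
    using infdist_affine_sp_attained[OF V(1)] by blast
  define x e where "x = a - b" and "e = z - b"
  have "x \<in> V" unfolding x_def by (rule affine_sp_diff_mem[OF subspace_V a(1) b(1)])
  then have "norm x \<le> mu * norm (P x)"
    using norm_le_mu_stab[OF V(1,2)] V(3) by (meson mult_right_mono norm_ge_zero order.trans)
  then have residual: "norm (x - P x) \<le> s * norm (P x)" unfolding s_def by (rule norm_residual_le)
  have "norm (P x) \<le> norm (w - P b)"
    unfolding x_def by (rule norm_orth_proj_diff_le[OF subspace_V a(1) b(1) best])
  also have "w - P b = P e + (w - P z)" unfolding e_def by (simp add: orth_proj_diff)
  finally have Px: "norm (P x) \<le> norm (P e) + norm (w - P z)"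
    using norm_triangle_ineq order.trans by blast
  define q where "q = (x - P x) - (e - P e)"
  have q: "norm q \<le> mu * norm e + s * norm (w - P z)"
    unfolding q_def using norm_residual_diff_le[OF residual Px s] mu by simp
  have "pbdw W ub V w - z = (w - P z) + q"
    unfolding a(2) q_def x_def e_def by (simp add: orth_proj_diff algebra_simps)
  moreover have "w - P z \<in> W" using w orth_proj_in_W subspace_diff[OF subspace_W] by blast
  moreover have "q \<in> W\<^sup>\<bottom>"
    unfolding q_def using subspace_diff[OF subspace_orthogonal_comp orth_proj_residual orth_proj_residual] .
  ultimately have "(norm (pbdw W ub V w - z))\<^sup>2 = (norm q)\<^sup>2 + (norm (w - P z))\<^sup>2"
    using norm_add_Pythagorean_orthogonal_comp by simp
  then have "norm (pbdw W ub V w - z) = sqrt ((norm q)\<^sup>2 + (norm (w - P z))\<^sup>2)"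
    by (metis abs_norm_cancel real_sqrt_abs)
  also have "\<dots> \<le> sqrt ((mu * norm e + s * norm (w - P z))\<^sup>2 + (norm (w - P z))\<^sup>2)"
    using q by (simp add: power_mono)
  also have "\<dots> \<le> mu * norm e + mu * norm (w - P z)"
    using s mu by (intro sqrt_sum_squares_le) simp_all
  finally show ?thesis using b(2) by (simp add: e_def distrib_left)
qed

end

section \<open>Model selection\<close>

lemma bounded_fattened:
  fixes M :: "'a::real_normed_vector set"
  assumes M: "compact M" "M \<noteq> {}"
  shows "bounded (fattened M s)"
proof -
  obtain B where B: "\<And>x. x \<in> M \<Longrightarrow> norm x \<le> B"
    using compact_imp_bounded[OF M(1)] unfolding bounded_iff by blast
  have "norm v \<le> B + s" if "v \<in> fattened M s" for v
  proof -
    obtain m where "m \<in> M" "infdist v M = dist v m" using compact_infdist_attained[OF M] by blast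
    then show ?thesis
      using B[of m] norm_triangle_sub[of v m] that by (simp add: fattened_def dist_norm)
  qed
  then show ?thesis unfolding bounded_iff by blast
qed

lemma norm_diff_le_delta:
  assumes M: "compact M" "M \<noteq> {}"
    and ab: "a \<in> fattened M s" "b \<in> fattened M s" "a - b \<in> orthogonal_comp W"
  shows "norm (a - b) \<le> delta M W s"
proof -
  obtain B where B: "\<And>x. x \<in> fattened M s \<Longrightarrow> norm x \<le> B"
    using bounded_fattened[OF M] unfolding bounded_iff by blast
  have "norm (x - y) \<le> B + B" if "x \<in> fattened M s" "y \<in> fattened M s" for x y
    using norm_triangle_ineq4[of x y] B[OF that(1)] B[OF that(2)] by linarith
  then have "bdd_above {norm (u - v) | u v. u \<in> fattened M s \<and> v \<in> fattened M s
                                      \<and> u - v \<in> orthogonal_comp W}"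
    by (intro bdd_aboveI[of _ "B + B"]) blast
  then show ?thesis unfolding delta_def by (rule cSup_upper[rotated]) (use ab in blast)
qed

lemma infdist_le_of_surrogate_min:
  fixes S :: "'a::metric_space \<Rightarrow> real"
  assumes "r * infdist x M \<le> S x" "S x \<le> S y" "S y \<le> R * infdist y M"
    and "infdist y M \<le> \<rho>" "0 < r" "0 \<le> R"
  shows "infdist x M \<le> (R / r) * \<rho>"
proof -
  have "r * infdist x M \<le> R * \<rho>"
    using assms(1-3) mult_left_mono[OF assms(4,6)] by linarith
  then show ?thesis using assms(5) by (simp add: field_simps)
qed

lemma admissible_cell_space:
  "admissible M W m K ub Vb eps mu \<Longrightarrow> k \<in> {1..K} \<Longrightarrow>
    fin_dim_subspace (Vb k) \<and> Vb k \<inter> orthogonal_comp W = {0}"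
  unfolding admissible_def by blast

context fin_dim_proj
begin

lemma admissible_pbdw_near_model:
  assumes M: "compact M" "M \<noteq> {}" and adm: "admissible M W m K ub Vb eps mu" and mu: "1 \<le> mu"
    and u: "infdist u M \<le> eps_model" and eta: "eta \<in> W" "norm eta \<le> eps_noise"
  shows "\<exists>k\<in>{1..K}. infdist (pbdw W (ub k) (Vb k) (P u + eta)) M
                      \<le> mu * (eps + eps_noise) + (mu + 1) * eps_model"
proof -
  obtain z where z: "z \<in> M" "infdist u M = dist u z" using compact_infdist_attained[OF M] by blast
  obtain Mk where Mk: "M = (\<Union>k\<in>{1..K}. Mk k)"
    "\<And>k. k \<in> {1..K} \<Longrightarrow> (\<forall>v\<in>Mk k. infdist v (affine_sp (ub k) (Vb k)) \<le> eps)
                              \<and> mu_stab (Vb k) W \<le> mu"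
    using adm unfolding admissible_def by metis
  obtain k where k: "k \<in> {1..K}" "z \<in> Mk k" using z(1) Mk(1) by blast
  have V: "fin_dim_subspace (Vb k)" "Vb k \<inter> W\<^sup>\<bottom> = {0}"
    using admissible_cell_space[OF adm k(1)] by blast+
  let ?A = "affine_sp (ub k) (Vb k)" and ?v = "pbdw W (ub k) (Vb k) (P u + eta)"
  have "infdist u ?A \<le> infdist z ?A + dist u z" by (rule infdist_triangle)
  also have "\<dots> \<le> eps + eps_model" using Mk(2)[OF k(1)] k(2) z(2) u by (simp add: add_mono)
  finally have dist_u: "infdist u ?A \<le> eps + eps_model" .
  have "P u + eta \<in> W" using eta(1) orth_proj_in_W subspace_add[OF subspace_W] by blast
  then have "norm (?v - u) \<le> mu * (infdist u ?A + norm eta)"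
    using pbdw_error_le[OF V Mk(2)[OF k(1), THEN conjunct2] mu, of "P u + eta" "ub k" u] by simp
  also have "\<dots> \<le> mu * (eps + eps_model + eps_noise)"
    using dist_u eta(2) mu by (intro mult_left_mono) simp_all
  finally have "norm (?v - u) \<le> mu * (eps + eps_model + eps_noise)" .
  then have "infdist ?v M \<le> eps_model + mu * (eps + eps_model + eps_noise)"
    using infdist_triangle[of ?v M u] u by (simp add: dist_norm)
  then show ?thesis using k(1) by (auto simp: algebra_simps)
qed

lemma consistent_error_le_delta:
  assumes M: "compact M" "M \<noteq> {}"
    and u: "infdist u M \<le> eps_model" and eta: "eta \<in> W" "norm eta \<le> eps_noise"
    and v: "v \<in> proj_fibre W (P u + eta)" "infdist v M \<le> \<sigma>"
    and \<sigma>: "eps_model + eps_noise \<le> \<sigma>"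
  shows "norm (u - v) \<le> delta M W \<sigma> + eps_noise"
proof -
  have "infdist (u + eta) M \<le> infdist u M + norm eta"
    using infdist_triangle[of "u + eta" M u] by (simp add: dist_norm)
  then have "u + eta \<in> fattened M \<sigma>" using u eta(2) \<sigma> by (simp add: fattened_def)
  moreover have "v \<in> fattened M \<sigma>" using v(2) by (simp add: fattened_def)
  moreover obtain z where "z \<in> W\<^sup>\<bottom>" "v = P u + eta + z" using v(1) by blast
  then have "u + eta - v = (u - P u) - z" by simp
  then have "u + eta - v \<in> W\<^sup>\<bottom>"
    using subspace_diff[OF subspace_orthogonal_comp orth_proj_residual[of u] \<open>z \<in> W\<^sup>\<bottom>\<close>]
    by metis
  ultimately have "norm (u + eta - v) \<le> delta M W \<sigma>" by (rule norm_diff_le_delta[OF M])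
  then show ?thesis using norm_triangle_ineq4[of "u + eta - v" eta] eta(2) by simp
qed

end

theorem theorem3p4:
  fixes M W :: "'v::{real_inner, complete_space} set"
    and m K :: nat and ub :: "nat \<Rightarrow> 'v" and Vb :: "nat \<Rightarrow> 'v set"
    and eps mu eps_model eps_noise r R :: real
    and u eta :: 'v and S :: "'v \<Rightarrow> real"
  assumes M: "compact M" "M \<noteq> {}"
    and W: "fin_dim_subspace W" "dim W = m"
    and adm: "admissible M W m K ub Vb eps mu"
    and eps: "eps > 0" and mu: "mu \<ge> 1"
    and u: "infdist u M \<le> eps_model"
    and eta: "eta \<in> W" "norm eta \<le> eps_noise"
    and S_nonneg: "\<And>v. S v \<ge> 0"
    and S_bounds: "\<And>v. r * infdist v M \<le> S v" "\<And>v. S v \<le> R * infdist v M"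
    and rR: "0 < r" "r \<le> R"
  defines "w \<equiv> orth_proj W u + eta"
    and "\<rho> \<equiv> mu * (eps + eps_noise) + (mu + 1) * eps_model"
  shows "(\<forall>kstar\<in>{1..K}.
            (\<forall>k\<in>{1..K}. S (pbdw W (ub kstar) (Vb kstar) w) \<le> S (pbdw W (ub k) (Vb k) w))
            \<longrightarrow> norm (u - pbdw W (ub kstar) (Vb kstar) w)
                  \<le> delta M W ((R / r) * \<rho>) + eps_noise)
       \<and> (\<forall>kstar\<in>{1..K}.
            (\<forall>k\<in>{1..K}. infdist (pbdw W (ub kstar) (Vb kstar) w) M
                          \<le> infdist (pbdw W (ub k) (Vb k) w) M)
            \<longrightarrow> norm (u - pbdw W (ub kstar) (Vb kstar) w)
                  \<le> delta M W (1 * \<rho>) + eps_noise)"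
proof -
  interpret fin_dim_proj W by (rule fin_dim_proj.intro[OF W(1)])
  define v where "v k = pbdw W (ub k) (Vb k) w" for k
  have "w \<in> W" unfolding w_def using eta(1) orth_proj_in_W subspace_add[OF subspace_W] by blast
  then have fibre: "v k \<in> proj_fibre W w" if "k \<in> {1..K}" for k
    unfolding v_def using pbdw_mem admissible_cell_space[OF adm that] by blast
  obtain k0 where k0: "k0 \<in> {1..K}" "infdist (v k0) M \<le> \<rho>"
    using admissible_pbdw_near_model[OF M adm mu u eta, folded w_def \<rho>_def] unfolding v_def by blast
  have "0 \<le> eps_model" "0 \<le> eps_noise"
    using infdist_nonneg[of u M] u norm_ge_zero[of eta] eta(2) by linarith+
  then have radius: "eps_model + eps_noise \<le> \<rho>"
    unfolding \<rho>_def using mu eps mult_right_mono[of 1 mu "eps + eps_noise"]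
      mult_right_mono[of 1 mu eps_model]
    by (simp add: algebra_simps)
  then have "\<rho> \<le> (R / r) * \<rho>"
    using rR mult_right_mono[of 1 "R / r" \<rho>] \<open>0 \<le> eps_model\<close> \<open>0 \<le> eps_noise\<close> by simp
  have error: "norm (u - v k) \<le> delta M W \<sigma> + eps_noise"
    if "k \<in> {1..K}" "infdist (v k) M \<le> \<sigma>" "\<rho> \<le> \<sigma>" for k \<sigma>
    using consistent_error_le_delta[OF M u eta, folded w_def, OF fibre] radius that by simp
  have "infdist (v ks) M \<le> (R / r) * \<rho>" if "\<forall>k\<in>{1..K}. S (v ks) \<le> S (v k)" for ks
    using infdist_le_of_surrogate_min[where x="v ks" and y="v k0", OF S_bounds(1) _ S_bounds(2)]
      that k0 rR by simp
  moreover have "infdist (v ks) M \<le> 1 * \<rho>"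
    if "\<forall>k\<in>{1..K}. infdist (v ks) M \<le> infdist (v k) M" for ks
    using that k0 by force
  ultimately show ?thesis unfolding v_def[symmetric] using error \<open>\<rho> \<le> (R / r) * \<rho>\<close> by auto
qed

end
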